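(* Let $A=M_{12}$ acting primitively on $12$ points, and for $r\geq 1$ let $G=A\wr C_r$, where $C_r$ is a cyclic group of order $r$ acting regularly on $r$ coordinates, with $G$ acting in product action on $n=12^r$ points. Then for all sufficiently large $r$, $k(G)>n^{1.08}$.
   Context: $k(X)$ denotes the number of conjugacy classes of a finite group $X$. Product action: $A\wr C_r=A^r\rtimes C_r$ acts on $\Delta^r$ ($|\Delta|=12$), with $A^r$ acting coordinatewise and $C_r$ permuting coordinates. *)

theory Defs
  imports Complex_Main
begin

definition perm12 :: "nat list \<Rightarrow> nat \<Rightarrow> nat" where
  "perm12 p = (\<lambda>x. if x < 12 then p ! x else x)"

text \<open>GAP generators of MathieuGroup(12), shifted to points 0..11:
  (1,...,11), (3,7,11,8)(4,10,5,6), (1,12)(2,11)(3,6)(4,8)(5,9)(7,10).\<close>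

definition m12_gen1 :: "nat \<Rightarrow> nat" where
  "m12_gen1 = perm12 [1,2,3,4,5,6,7,8,9,10,0,11]"

definition m12_gen2 :: "nat \<Rightarrow> nat" where
  "m12_gen2 = perm12 [0,1,6,9,5,3,10,2,8,4,7,11]"

definition m12_gen3 :: "nat \<Rightarrow> nat" where
  "m12_gen3 = perm12 [11,10,5,7,8,2,9,3,4,6,1,0]"

inductive_set M12 :: "(nat \<Rightarrow> nat) set" where
  M12_id: "id \<in> M12"
| M12_g1: "f \<in> M12 \<Longrightarrow> m12_gen1 \<circ> f \<in> M12"
| M12_g2: "f \<in> M12 \<Longrightarrow> m12_gen2 \<circ> f \<in> M12"
| M12_g3: "f \<in> M12 \<Longrightarrow> m12_gen3 \<circ> f \<in> M12"

text \<open>The product domain Delta^r, Delta = {0..<12}: tuples indexed by {0..<r},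
  padded with 0 outside.\<close>

definition prod_dom :: "nat \<Rightarrow> (nat \<Rightarrow> nat) set" where
  "prod_dom r = {x. (\<forall>i<r. x i < 12) \<and> (\<forall>i\<ge>r. x i = 0)}"

text \<open>The element of A wr C_r given by (a_0,...,a_{r-1}) in A^r and the shift by s in C_r,
  acting on Delta^r in product action (identity outside Delta^r).\<close>

definition wr_elem :: "nat \<Rightarrow> (nat \<Rightarrow> nat \<Rightarrow> nat) \<Rightarrow> nat \<Rightarrow> (nat \<Rightarrow> nat) \<Rightarrow> (nat \<Rightarrow> nat)" where
  "wr_elem r a s = (\<lambda>x. if x \<in> prod_dom r
      then (\<lambda>i. if i < r then a i (x ((i + s) mod r)) else 0) else x)"

definition M12_wr :: "nat \<Rightarrow> ((nat \<Rightarrow> nat) \<Rightarrow> (nat \<Rightarrow> nat)) set" where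
  "M12_wr r = {wr_elem r a s | a s. s < r \<and> (\<forall>i<r. a i \<in> M12)}"

text \<open>k(G) for a group G of permutations (under composition): number of conjugacy classes.
  h is conjugate to x iff h = g x g^-1 for some g in G, i.e. h o g = g o x.\<close>

definition num_conj_classes :: "('a \<Rightarrow> 'a) set \<Rightarrow> nat" where
  "num_conj_classes G = card ((\<lambda>x. {h \<in> G. \<exists>g\<in>G. h \<circ> g = g \<circ> x}) ` G)"

end

theory Submission
  imports Defs "HOL-Combinatorics.Permutations"
begin

(* M12 has 15 conjugacy classes.  For a word xs over these 15 classes, take the base
   element of A wr C_r whose i-th coordinate is the representative of class xs ! i.
   Conjugating a base element by (b, s) conjugates its coordinate (i + s) mod r into
   coordinate i, so two such base elements are conjugate only if their words are
   rotations of each other.  This gives k(G) >= 15^r / r, and 15 > 12^1.08 makes this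
   exceed n^1.08 = (12^1.08)^r for large r.  The classes are told apart by a
   conjugation invariant built from fixed points of powers and from the hexads of the
   Steiner system S(5,6,12), which M12 preserves. *)

section \<open>Hexads and M12\<close>

(* The 132 hexads of the Steiner system S(5,6,12), as sorted lists: the M12-orbit of
   {0,1,2,3,4,6}. *)
definition hexad_list :: "nat list list" where
  "hexad_list =
     [[0,1,2,3,4,6], [0,1,2,3,5,10], [0,1,2,3,7,8], [0,1,2,3,9,11], [0,1,2,4,5,8], [0,1,2,4,7,11],
      [0,1,2,4,9,10], [0,1,2,5,6,11], [0,1,2,5,7,9], [0,1,2,6,7,10], [0,1,2,6,8,9], [0,1,2,8,10,11],
      [0,1,3,4,5,9], [0,1,3,4,7,10], [0,1,3,4,8,11], [0,1,3,5,6,8], [0,1,3,5,7,11], [0,1,3,6,7,9],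
      [0,1,3,6,10,11], [0,1,3,8,9,10], [0,1,4,5,6,7], [0,1,4,5,10,11], [0,1,4,6,8,10], [0,1,4,6,9,11],
      [0,1,4,7,8,9], [0,1,5,6,9,10], [0,1,5,7,8,10], [0,1,5,8,9,11], [0,1,6,7,8,11], [0,1,7,9,10,11],
      [0,2,3,4,5,11], [0,2,3,4,7,9], [0,2,3,4,8,10], [0,2,3,5,6,7], [0,2,3,5,8,9], [0,2,3,6,8,11],
      [0,2,3,6,9,10], [0,2,3,7,10,11], [0,2,4,5,6,9], [0,2,4,5,7,10], [0,2,4,6,7,8], [0,2,4,6,10,11],
      [0,2,4,8,9,11], [0,2,5,6,8,10], [0,2,5,7,8,11], [0,2,5,9,10,11], [0,2,6,7,9,11], [0,2,7,8,9,10],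
      [0,3,4,5,6,10], [0,3,4,5,7,8], [0,3,4,6,7,11], [0,3,4,6,8,9], [0,3,4,9,10,11], [0,3,5,6,9,11],
      [0,3,5,7,9,10], [0,3,5,8,10,11], [0,3,6,7,8,10], [0,3,7,8,9,11], [0,4,5,6,8,11], [0,4,5,7,9,11],
      [0,4,5,8,9,10], [0,4,6,7,9,10], [0,4,7,8,10,11], [0,5,6,7,8,9], [0,5,6,7,10,11], [0,6,8,9,10,11],
      [1,2,3,4,5,7], [1,2,3,4,8,9], [1,2,3,4,10,11], [1,2,3,5,6,9], [1,2,3,5,8,11], [1,2,3,6,7,11],
      [1,2,3,6,8,10], [1,2,3,7,9,10], [1,2,4,5,6,10], [1,2,4,5,9,11], [1,2,4,6,7,9], [1,2,4,6,8,11],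
      [1,2,4,7,8,10], [1,2,5,6,7,8], [1,2,5,7,10,11], [1,2,5,8,9,10], [1,2,6,9,10,11], [1,2,7,8,9,11],
      [1,3,4,5,6,11], [1,3,4,5,8,10], [1,3,4,6,7,8], [1,3,4,6,9,10], [1,3,4,7,9,11], [1,3,5,6,7,10],
      [1,3,5,7,8,9], [1,3,5,9,10,11], [1,3,6,8,9,11], [1,3,7,8,10,11], [1,4,5,6,8,9], [1,4,5,7,8,11],
      [1,4,5,7,9,10], [1,4,6,7,10,11], [1,4,8,9,10,11], [1,5,6,7,9,11], [1,5,6,8,10,11], [1,6,7,8,9,10],
      [2,3,4,5,6,8], [2,3,4,5,9,10], [2,3,4,6,7,10], [2,3,4,6,9,11], [2,3,4,7,8,11], [2,3,5,6,10,11],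
      [2,3,5,7,8,10], [2,3,5,7,9,11], [2,3,6,7,8,9], [2,3,8,9,10,11], [2,4,5,6,7,11], [2,4,5,7,8,9],
      [2,4,5,8,10,11], [2,4,6,8,9,10], [2,4,7,9,10,11], [2,5,6,7,9,10], [2,5,6,8,9,11], [2,6,7,8,10,11],
      [3,4,5,6,7,9], [3,4,5,7,10,11], [3,4,5,8,9,11], [3,4,6,8,10,11], [3,4,7,8,9,10], [3,5,6,7,8,11],
      [3,5,6,8,9,10], [3,6,7,9,10,11], [4,5,6,7,8,10], [4,5,6,9,10,11], [4,6,7,8,9,11], [5,7,8,9,10,11]]"

definition hexads :: "nat set set" where
  "hexads = set ` set hexad_list"

lemma hexad_list_sorted_distinct_length:
  "\<forall>h \<in> set hexad_list. sorted h \<and> distinct h \<and> length h = 6"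
  by code_simp

lemma set_mem_hexads_iff:
  assumes "length L = 6"
  shows "set L \<in> hexads \<longleftrightarrow> distinct L \<and> sort L \<in> set hexad_list"
proof
  assume "set L \<in> hexads"
  then obtain h where h: "h \<in> set hexad_list" "set L = set h"
    unfolding hexads_def by blast
  with hexad_list_sorted_distinct_length have "sorted h" "distinct h" "length h = 6"
    by auto
  with assms h(2) have "distinct L"
    by (metis card_distinct distinct_card)
  moreover have "sort L = h"
    using \<open>distinct L\<close> h(2) \<open>sorted h\<close> \<open>distinct h\<close>
    by (intro sorted_distinct_set_unique) auto
  ultimately show "distinct L \<and> sort L \<in> set hexad_list"
    using h(1) by simp
next
  assume "distinct L \<and> sort L \<in> set hexad_list"
  then show "set L \<in> hexads"
    unfolding hexads_def by (metis image_eqI set_sort)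
qed

lemma image_mem_iff_of_image_mem:
  assumes "finite \<B>" and "inj g" and "\<And>H. H \<in> \<B> \<Longrightarrow> g ` H \<in> \<B>"
  shows "g ` H \<in> \<B> \<longleftrightarrow> H \<in> \<B>"
proof
  assume "g ` H \<in> \<B>"
  have "inj_on (image g) \<B>"
    using assms(2) by (simp add: inj_on_def inj_image_eq_iff)
  then have "image g ` \<B> = \<B>"
    using endo_inj_surj[OF assms(1)] assms(3) by blast
  with \<open>g ` H \<in> \<B>\<close> obtain H' where "H' \<in> \<B>" "g ` H = g ` H'"
    by (metis imageE)
  then show "H \<in> \<B>"
    using assms(2) by (simp add: inj_image_eq_iff)
qed (rule assms(3))

definition hexad_preserving :: "(nat \<Rightarrow> nat) \<Rightarrow> bool" where
  "hexad_preserving g \<longleftrightarrow>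
     g permutes {..<12} \<and> (\<forall>H. g ` H \<in> hexads \<longleftrightarrow> H \<in> hexads)"

lemma hexad_preserving_comp:
  assumes "hexad_preserving f" and "hexad_preserving g"
  shows "hexad_preserving (f \<circ> g)"
proof -
  have "(f \<circ> g) ` H \<in> hexads \<longleftrightarrow> H \<in> hexads" for H
    using assms unfolding hexad_preserving_def image_comp[symmetric] by blast
  with assms show ?thesis
    unfolding hexad_preserving_def by (blast intro: permutes_compose)
qed

lemma perm12_permutes:
  assumes "sort p = [0..<12]"
  shows "perm12 p permutes {..<12}"
proof (rule bij_imp_permutes)
  have "distinct p" "set p = {..<12}" "length p = 12"
    using arg_cong[OF assms, of distinct] arg_cong[OF assms, of set]
      arg_cong[OF assms, of length] by auto
  then have "bij_betw ((!) p) {..<12} {..<12}"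
    by (intro bij_betw_nth) auto
  then show "bij_betw (perm12 p) {..<12} {..<12}"
    by (rule bij_betw_cong[THEN iffD1, rotated]) (simp add: perm12_def)
  show "x \<notin> {..<12} \<Longrightarrow> perm12 p x = x" for x
    by (simp add: perm12_def)
qed

lemma hexad_preserving_perm12:
  assumes "sort p = [0..<12]"
    and "\<forall>h \<in> set hexad_list. sort (map (perm12 p) h) \<in> set hexad_list"
  shows "hexad_preserving (perm12 p)"
proof -
  have "perm12 p ` H \<in> hexads" if H: "H \<in> hexads" for H
  proof -
    obtain h where "h \<in> set hexad_list" "H = set h"
      using H unfolding hexads_def by blast
    with assms(2) show ?thesis
      unfolding hexads_def by (metis image_eqI image_set set_sort)
  qed
  moreover have "finite hexads"
    by (simp add: hexads_def)
  moreover have "inj (perm12 p)"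
    using perm12_permutes[OF assms(1)] by (rule permutes_inj)
  ultimately show ?thesis
    using perm12_permutes[OF assms(1)] image_mem_iff_of_image_mem[of hexads "perm12 p"]
    unfolding hexad_preserving_def by blast
qed

lemma hexad_preserving_m12_gen1: "hexad_preserving m12_gen1"
  unfolding m12_gen1_def by (rule hexad_preserving_perm12; code_simp)

lemma hexad_preserving_m12_gen2: "hexad_preserving m12_gen2"
  unfolding m12_gen2_def by (rule hexad_preserving_perm12; code_simp)

lemma hexad_preserving_m12_gen3: "hexad_preserving m12_gen3"
  unfolding m12_gen3_def by (rule hexad_preserving_perm12; code_simp)

lemma M12_hexad_preserving:
  assumes "f \<in> M12"
  shows "hexad_preserving f"
  using assms
proof (induction rule: M12.induct)
  case M12_id
  show ?case
    unfolding hexad_preserving_def by (simp only: permutes_id image_id id_apply simp_thms)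
next
  case (M12_g1 f)
  show ?case
    by (rule hexad_preserving_comp[OF hexad_preserving_m12_gen1 M12_g1.IH])
next
  case (M12_g2 f)
  show ?case
    by (rule hexad_preserving_comp[OF hexad_preserving_m12_gen2 M12_g2.IH])
next
  case (M12_g3 f)
  show ?case
    by (rule hexad_preserving_comp[OF hexad_preserving_m12_gen3 M12_g3.IH])
qed

lemma M12_permutes:
  assumes "f \<in> M12"
  shows "f permutes {..<12}"
  using M12_hexad_preserving[OF assms] by (simp add: hexad_preserving_def)

lemma finite_M12: "finite M12"
  by (rule finite_subset[OF _ finite_permutations[of "{..<12::nat}"]]) (auto intro: M12_permutes)

lemma M12_comp:
  assumes "f \<in> M12" and "g \<in> M12"
  shows "f \<circ> g \<in> M12"
  using assms by (induction rule: M12.induct) (auto intro: M12.intros simp: comp_assoc)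

section \<open>A conjugacy invariant separating the classes of M12\<close>

lemma funpow_conj_apply:
  assumes "h \<circ> g = g \<circ> x"
  shows "(h ^^ k) (g z) = g ((x ^^ k) z)"
proof (induction k)
  case (Suc k)
  then show ?case
    using fun_cong[OF assms, of "(x ^^ k) z"] by simp
qed simp

lemma card_Collect_permutes_eq:
  assumes "g permutes D" and "\<And>z. z \<in> D \<Longrightarrow> P (g z) \<longleftrightarrow> Q z"
  shows "card {z \<in> D. P z} = card {z \<in> D. Q z}"
proof -
  have "{z \<in> D. P z} = g ` {z \<in> D. Q z}"
  proof (intro equalityI subsetI)
    fix y
    assume y: "y \<in> {z \<in> D. P z}"
    then obtain z where z: "z \<in> D" "y = g z"
      using permutes_image[OF assms(1)] by blast
    with y assms(2) have "Q z"
      by simp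
    with z show "y \<in> g ` {z \<in> D. Q z}"
      by blast
  next
    fix y
    assume "y \<in> g ` {z \<in> D. Q z}"
    then obtain z where "z \<in> D" "Q z" "y = g z"
      by blast
    then show "y \<in> {z \<in> D. P z}"
      using assms by (simp add: permutes_in_image)
  qed
  then show ?thesis
    by (simp add: card_image permutes_inj_on[OF assms(1)])
qed

(* The fixed-point counts of x, ..., x^6 already separate all classes of M12 except
   the two classes of elements of order 11, which differ in whether
   {z, x z, x^2 z, x^3 z, x^4 z, x^6 z} is a hexad. *)
definition class_invariant :: "(nat \<Rightarrow> nat) \<Rightarrow> nat list \<times> nat" where
  "class_invariant x =
     (map (\<lambda>k. card {z \<in> {..<12}. (x ^^ k) z = z}) [1..<7],
      card {z \<in> {..<12}. (\<lambda>s. (x ^^ s) z) ` {0, 1, 2, 3, 4, 6} \<in> hexads})"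

lemma class_invariant_conj:
  assumes "hexad_preserving g" and "h \<circ> g = g \<circ> x"
  shows "class_invariant h = class_invariant x"
proof -
  have g: "g permutes {..<12}"
    using assms(1) by (simp add: hexad_preserving_def)
  have preserves: "g ` H \<in> hexads \<longleftrightarrow> H \<in> hexads" for H
    using assms(1) by (simp add: hexad_preserving_def)
  note pow = funpow_conj_apply[OF assms(2)]
  have "card {z \<in> {..<12}. (h ^^ k) z = z} = card {z \<in> {..<12}. (x ^^ k) z = z}" for k
    by (rule card_Collect_permutes_eq[OF g]) (simp add: pow permutes_inj[OF g, THEN inj_eq])
  moreover have "card {z \<in> {..<12}. (\<lambda>s. (h ^^ s) z) ` {0, 1, 2, 3, 4, 6} \<in> hexads} =
      card {z \<in> {..<12}. (\<lambda>s. (x ^^ s) z) ` {0, 1, 2, 3, 4, 6} \<in> hexads}"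
  proof (rule card_Collect_permutes_eq[OF g])
    fix z
    have "(\<lambda>s. (h ^^ s) (g z)) ` {0, 1, 2, 3, 4, 6} = g ` (\<lambda>s. (x ^^ s) z) ` {0, 1, 2, 3, 4, 6}"
      by (simp only: pow image_image)
    then show "(\<lambda>s. (h ^^ s) (g z)) ` {0, 1, 2, 3, 4, 6} \<in> hexads \<longleftrightarrow>
        (\<lambda>s. (x ^^ s) z) ` {0, 1, 2, 3, 4, 6} \<in> hexads"
      by (simp only: preserves)
  qed
  ultimately show ?thesis
    by (simp add: class_invariant_def)
qed

primrec power_table :: "nat \<Rightarrow> 'a list \<Rightarrow> ('a \<Rightarrow> 'a) \<Rightarrow> 'a list list" where
  "power_table 0 xs f = []"
| "power_table (Suc n) xs f = xs # power_table n (map f xs) f"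

lemma nth_power_table:
  assumes "k < n"
  shows "power_table n xs f ! k = map (f ^^ k) xs"
  using assms
proof (induction n arbitrary: xs k)
  case (Suc n)
  then show ?case
    by (cases k) (simp_all add: funpow_swap1)
qed simp

lemma length_filter_upt: "length (filter P [0..<n]) = card {z \<in> {..<n}. P z}"
  unfolding length_filter_conv_card by (auto intro: arg_cong[where f = card])

definition table_orbit :: "nat list list \<Rightarrow> nat \<Rightarrow> nat list" where
  "table_orbit T z = map (\<lambda>s. T ! s ! z) [0, 1, 2, 3, 4, 6]"

(* Executable form of class_invariant on the table of powers x^0, ..., x^6.  The
   distinctness filter is logically redundant (hexads have six points); it keeps
   evaluation fast, since only points on long cycles pass it. *)
definition table_invariant :: "nat list list \<Rightarrow> nat list \<times> nat" where
  "table_invariant T =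
     (map (\<lambda>k. length (filter (\<lambda>z. T ! k ! z = z) [0..<12])) [1..<7],
      length (filter (\<lambda>z. sort (table_orbit T z) \<in> set hexad_list)
        (filter (\<lambda>z. distinct (table_orbit T z)) [0..<12])))"

lemma length_filter_table_orbit_hexads:
  assumes T: "\<And>k z. k < 7 \<Longrightarrow> z < 12 \<Longrightarrow> T ! k ! z = (x ^^ k) z"
  shows "length (filter (\<lambda>z. sort (table_orbit T z) \<in> set hexad_list)
      (filter (\<lambda>z. distinct (table_orbit T z)) [0..<12])) =
    card {z \<in> {..<12}. (\<lambda>s. (x ^^ s) z) ` {0, 1, 2, 3, 4, 6} \<in> hexads}"
proof -
  have "distinct (table_orbit T z) \<and> sort (table_orbit T z) \<in> set hexad_list \<longleftrightarrow>
      (\<lambda>s. (x ^^ s) z) ` {0, 1, 2, 3, 4, 6} \<in> hexads" if "z < 12" for z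
  proof -
    let ?orbit = "map (\<lambda>s. (x ^^ s) z) [0, 1, 2, 3, 4, 6]"
    have "table_orbit T z = ?orbit"
      unfolding table_orbit_def by (rule map_cong[OF refl]) (auto simp: T that)
    moreover have "set ?orbit = (\<lambda>s. (x ^^ s) z) ` {0, 1, 2, 3, 4, 6}"
      by simp
    moreover have "set ?orbit \<in> hexads \<longleftrightarrow> distinct ?orbit \<and> sort ?orbit \<in> set hexad_list"
      by (rule set_mem_hexads_iff) simp
    ultimately show ?thesis
      by (simp only:)
  qed
  then have "{z \<in> {..<12}. distinct (table_orbit T z) \<and> sort (table_orbit T z) \<in> set hexad_list} =
      {z \<in> {..<12}. (\<lambda>s. (x ^^ s) z) ` {0, 1, 2, 3, 4, 6} \<in> hexads}"
    by (intro Collect_cong) (auto simp only: lessThan_iff)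
  then show ?thesis
    by (simp only: filter_filter length_filter_upt)
qed

lemma class_invariant_code [code]:
  "class_invariant x = table_invariant (power_table 7 [0..<12] x)"
proof -
  define T where "T = power_table 7 [0..<12] x"
  have T: "T ! k ! z = (x ^^ k) z" if "k < 7" "z < 12" for k z
    using that by (simp add: T_def nth_power_table)
  have "length (filter (\<lambda>z. T ! k ! z = z) [0..<12]) = card {z \<in> {..<12}. (x ^^ k) z = z}"
    if "k < 7" for k
  proof -
    have "{z \<in> {..<12}. T ! k ! z = z} = {z \<in> {..<12}. (x ^^ k) z = z}"
      using T[OF that] by auto
    then show ?thesis
      by (simp only: length_filter_upt)
  qed
  moreover have "length (filter (\<lambda>z. sort (table_orbit T z) \<in> set hexad_list)
      (filter (\<lambda>z. distinct (table_orbit T z)) [0..<12])) =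
    card {z \<in> {..<12}. (\<lambda>s. (x ^^ s) z) ` {0, 1, 2, 3, 4, 6} \<in> hexads}"
    using T by (rule length_filter_table_orbit_hexads)
  ultimately show ?thesis
    unfolding class_invariant_def table_invariant_def T_def[symmetric] by simp
qed

definition m12_class_reps :: "(nat \<Rightarrow> nat) list" where
  "m12_class_reps =
     [id, m12_gen1, m12_gen2, m12_gen3, m12_gen1 \<circ> m12_gen1, m12_gen3 \<circ> m12_gen1,
      m12_gen2 \<circ> m12_gen2, m12_gen3 \<circ> m12_gen2, m12_gen2 \<circ> m12_gen1 \<circ> m12_gen1,
      m12_gen2 \<circ> m12_gen2 \<circ> m12_gen1, m12_gen3 \<circ> m12_gen2 \<circ> m12_gen1,
      m12_gen3 \<circ> m12_gen2 \<circ> m12_gen2, m12_gen2 \<circ> m12_gen1 \<circ> m12_gen1 \<circ> m12_gen1,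
      m12_gen2 \<circ> m12_gen3 \<circ> m12_gen2 \<circ> m12_gen1 \<circ> m12_gen1,
      m12_gen3 \<circ> m12_gen1 \<circ> m12_gen1 \<circ> m12_gen1 \<circ> m12_gen1 \<circ> m12_gen1]"

lemma length_m12_class_reps: "length m12_class_reps = 15"
  by (simp add: m12_class_reps_def)

lemma m12_class_reps_in_M12: "set m12_class_reps \<subseteq> M12"
proof -
  have gens: "m12_gen1 \<in> M12" "m12_gen2 \<in> M12" "m12_gen3 \<in> M12"
    using M12.intros(2-4)[OF M12_id] by simp_all
  show ?thesis
    unfolding m12_class_reps_def by (simp add: M12_id M12_comp gens)
qed

lemma m12_class_reps_nth_in_M12:
  assumes "j < 15"
  shows "m12_class_reps ! j \<in> M12"
proof -
  have "m12_class_reps ! j \<in> set m12_class_reps"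
    using assms by (simp add: length_m12_class_reps)
  then show ?thesis
    using m12_class_reps_in_M12 by blast
qed

lemma distinct_class_invariant_m12_class_reps:
  "distinct (map class_invariant m12_class_reps)"
  unfolding m12_class_reps_def m12_gen1_def m12_gen2_def m12_gen3_def by code_simp

section \<open>Conjugate base elements of the wreath product\<close>

lemma wr_elem_apply:
  assumes "x \<in> prod_dom r"
  shows "wr_elem r a s x i = (if i < r then a i (x ((i + s) mod r)) else 0)"
  using assms by (simp add: wr_elem_def)

lemma wr_elem_in_prod_dom:
  assumes "\<And>i. i < r \<Longrightarrow> a i permutes {..<12}" and "x \<in> prod_dom r"
  shows "wr_elem r a s x \<in> prod_dom r"
proof -
  have "a i (x ((i + s) mod r)) < 12" if "i < r" for i
  proof -
    have "(i + s) mod r < r"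
      using that by simp
    then have "x ((i + s) mod r) < 12"
      using assms(2) by (simp add: prod_dom_def)
    then show ?thesis
      using permutes_in_image[OF assms(1)[OF that]] by simp
  qed
  then show ?thesis
    using assms(2) by (simp add: prod_dom_def wr_elem_def)
qed

lemma wr_elem_base_conj_coord:
  assumes a: "\<And>i. i < r \<Longrightarrow> a i permutes {..<12}"
    and b: "\<And>i. i < r \<Longrightarrow> b i permutes {..<12}"
    and c: "\<And>i. i < r \<Longrightarrow> c i permutes {..<12}"
    and conj: "wr_elem r a 0 \<circ> wr_elem r b s = wr_elem r b s \<circ> wr_elem r c 0"
    and i: "i < r"
  shows "a i \<circ> b i = b i \<circ> c ((i + s) mod r)"
proof
  fix d
  define j where "j = (i + s) mod r"
  have j: "j < r"
    using i by (simp add: j_def)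
  show "(a i \<circ> b i) d = (b i \<circ> c ((i + s) mod r)) d"
  proof (cases "d < 12")
    case False
    then show ?thesis
      using a[OF i] b[OF i] c[OF j] by (simp add: permutes_not_in j_def)
  next
    case True
    define z where "z k = (if k = j then d else 0)" for k
    have z: "z \<in> prod_dom r"
      using True j by (simp add: z_def prod_dom_def)
    have "a i (b i d) = wr_elem r a 0 (wr_elem r b s z) i"
      using i by (simp add: wr_elem_apply wr_elem_in_prod_dom[OF b z] z j_def[symmetric] z_def)
    also have "\<dots> = wr_elem r b s (wr_elem r c 0 z) i"
      using fun_cong[OF conj, of z] by simp
    also have "\<dots> = b i (c j d)"
      using i j by (simp add: wr_elem_apply wr_elem_in_prod_dom[OF c z] z j_def[symmetric] z_def)
    finally show ?thesis
      by (simp add: j_def)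
  qed
qed

lemma id_in_M12_wr:
  assumes "r \<ge> 1"
  shows "id \<in> M12_wr r"
proof -
  have "wr_elem r (\<lambda>_. id) 0 = id"
    by (auto simp: wr_elem_def prod_dom_def fun_eq_iff)
  with assms M12_id show ?thesis
    unfolding M12_wr_def by (intro CollectI exI[of _ "\<lambda>_. id"] exI[of _ 0]) simp
qed

lemma finite_M12_wr: "finite (M12_wr r)"
proof -
  have "M12_wr r \<subseteq> (\<lambda>(a, s). wr_elem r a s) ` (Pi\<^sub>E {..<r} (\<lambda>_. M12) \<times> {..<r})"
  proof
    fix f
    assume "f \<in> M12_wr r"
    then obtain a s where f: "f = wr_elem r a s" and s: "s < r" and a: "\<forall>i<r. a i \<in> M12"
      unfolding M12_wr_def by blast
    have "f = wr_elem r (restrict a {..<r}) s"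
      unfolding f wr_elem_def by (simp add: fun_eq_iff)
    moreover have "restrict a {..<r} \<in> Pi\<^sub>E {..<r} (\<lambda>_. M12)"
      using a by simp
    ultimately show "f \<in> (\<lambda>(a, s). wr_elem r a s) ` (Pi\<^sub>E {..<r} (\<lambda>_. M12) \<times> {..<r})"
      using s by force
  qed
  moreover have "finite (Pi\<^sub>E {..<r} (\<lambda>_. M12) \<times> {..<r})"
    by (simp add: finite_PiE finite_M12)
  ultimately show ?thesis
    by (rule finite_subset[OF _ finite_imageI])
qed

definition base_elem :: "nat \<Rightarrow> nat list \<Rightarrow> (nat \<Rightarrow> nat) \<Rightarrow> nat \<Rightarrow> nat" where
  "base_elem r xs = wr_elem r (\<lambda>i. m12_class_reps ! (xs ! i)) 0"

lemma base_elem_in_M12_wr: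
  assumes "r \<ge> 1" and "set xs \<subseteq> {..<15}" and "length xs = r"
  shows "base_elem r xs \<in> M12_wr r"
proof -
  have "m12_class_reps ! (xs ! i) \<in> M12" if "i < r" for i
    using assms(2,3) that by (metis m12_class_reps_nth_in_M12 lessThan_iff nth_mem subsetD)
  then show ?thesis
    using assms(1) unfolding M12_wr_def base_elem_def by force
qed

lemma base_elem_conj_imp_rotate:
  assumes xs: "set xs \<subseteq> {..<15}" "length xs = r"
    and ys: "set ys \<subseteq> {..<15}" "length ys = r"
    and g: "g \<in> M12_wr r" and conj: "base_elem r ys \<circ> g = g \<circ> base_elem r xs"
  shows "\<exists>s<r. ys = rotate s xs"
proof -
  obtain b s where g_eq: "g = wr_elem r b s" and s: "s < r" and b: "\<forall>i<r. b i \<in> M12"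
    using g unfolding M12_wr_def by blast
  have xs_lt: "xs ! i < 15" and ys_lt: "ys ! i < 15" if "i < r" for i
    using xs ys that by (metis lessThan_iff nth_mem subsetD)+
  have xs_perm: "m12_class_reps ! (xs ! i) permutes {..<12}"
    and ys_perm: "m12_class_reps ! (ys ! i) permutes {..<12}"
    and b_perm: "b i permutes {..<12}" if "i < r" for i
    using xs_lt[OF that] ys_lt[OF that] b that by (simp_all add: M12_permutes m12_class_reps_nth_in_M12)
  have coord: "ys ! i = xs ! ((i + s) mod r)" if i: "i < r" for i
  proof -
    have j: "(i + s) mod r < r"
      using i by simp
    have "m12_class_reps ! (ys ! i) \<circ> b i = b i \<circ> m12_class_reps ! (xs ! ((i + s) mod r))"
      (is "?h \<circ> _ = _ \<circ> ?x")
      by (rule wr_elem_base_conj_coord[OF ys_perm b_perm xs_perm conj[unfolded base_elem_def g_eq] i])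
    moreover have "b i \<in> M12"
      using b i by simp
    ultimately have "class_invariant ?h = class_invariant ?x"
      using class_invariant_conj[OF M12_hexad_preserving] by blast
    then show ?thesis
      using nth_eq_iff_index_eq[OF distinct_class_invariant_m12_class_reps,
          of "ys ! i" "xs ! ((i + s) mod r)"] ys_lt[OF i] xs_lt[OF j]
      by (simp add: length_m12_class_reps)
  qed
  have "ys = rotate s xs"
    by (rule nth_equalityI) (simp_all add: xs ys nth_rotate coord add.commute)
  with s show ?thesis
    by blast
qed

section \<open>Counting conjugacy classes\<close>

lemma card_le_mult_card_image:
  assumes "finite T" and "\<And>x. x \<in> T \<Longrightarrow> card {y \<in> T. F y = F x} \<le> m"
  shows "card T \<le> m * card (F ` T)"
proof -
  have "card T = card (\<Union>c \<in> F ` T. {y \<in> T. F y = c})"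
    by (rule arg_cong[where f = card]) auto
  also have "\<dots> \<le> (\<Sum>c \<in> F ` T. card {y \<in> T. F y = c})"
    using assms(1) by (intro card_UN_le) simp
  also have "\<dots> \<le> (\<Sum>c \<in> F ` T. m)"
    using assms(2) by (intro sum_mono) blast
  finally show ?thesis
    by (simp add: mult.commute)
qed

lemma power_le_mult_num_conj_classes_M12_wr:
  assumes "r \<ge> 1"
  shows "15 ^ r \<le> r * num_conj_classes (M12_wr r)"
proof -
  define W where "W = {xs. set xs \<subseteq> {..<15::nat} \<and> length xs = r}"
  define cl where "cl x = {h \<in> M12_wr r. \<exists>g \<in> M12_wr r. h \<circ> g = g \<circ> x}" for x
  have "card W \<le> r * card ((cl \<circ> base_elem r) ` W)"
  proof (rule card_le_mult_card_image)
    show "finite W"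
      unfolding W_def by (rule finite_lists_length_eq) simp
    fix xs
    assume xs: "xs \<in> W"
    have "{ys \<in> W. (cl \<circ> base_elem r) ys = (cl \<circ> base_elem r) xs} \<subseteq>
        (\<lambda>s. rotate s xs) ` {..<r}"
    proof
      fix ys
      assume ys: "ys \<in> {ys \<in> W. (cl \<circ> base_elem r) ys = (cl \<circ> base_elem r) xs}"
      have "base_elem r ys \<in> cl (base_elem r ys)"
        using ys id_in_M12_wr[OF assms] base_elem_in_M12_wr[OF assms]
        unfolding cl_def W_def by fastforce
      with ys obtain g where g: "g \<in> M12_wr r"
        and conj: "base_elem r ys \<circ> g = g \<circ> base_elem r xs"
        unfolding cl_def by auto
      have "\<exists>s<r. ys = rotate s xs"
        using xs ys unfolding W_def by (intro base_elem_conj_imp_rotate[OF _ _ _ _ g conj]) auto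
      then show "ys \<in> (\<lambda>s. rotate s xs) ` {..<r}"
        by blast
    qed
    then have "card {ys \<in> W. (cl \<circ> base_elem r) ys = (cl \<circ> base_elem r) xs} \<le>
        card ((\<lambda>s. rotate s xs) ` {..<r})"
      by (rule card_mono[rotated]) simp
    also have "\<dots> \<le> r"
      using card_image_le[of "{..<r}" "\<lambda>s. rotate s xs"] by simp
    finally show "card {ys \<in> W. (cl \<circ> base_elem r) ys = (cl \<circ> base_elem r) xs} \<le> r" .
  qed
  also have "\<dots> \<le> r * card (cl ` M12_wr r)"
    using base_elem_in_M12_wr[OF assms] finite_M12_wr
    by (intro mult_le_mono2 card_mono) (auto simp: W_def)
  finally show ?thesis
    using card_lists_length_eq[of "{..<15::nat}" r]
    unfolding W_def num_conj_classes_def cl_def by simp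
qed

lemma twelve_powr_less_fifteen: "(12::real) powr 1.08 < 15"
proof -
  have "(15::real) ^ 100 > 12 ^ 108"
    by simp
  then have less: "(12 powr 1.08) powr 100 < (15::real) powr 100"
    by (simp add: powr_powr powr_realpow[symmetric])
  show ?thesis
  proof (rule ccontr)
    assume "\<not> ?thesis"
    then have "(15::real) powr 100 \<le> (12 powr 1.08) powr 100"
      by (intro powr_mono2) auto
    with less show False
      by simp
  qed
qed

lemma eventually_mult_power_less:
  fixes b c :: real
  assumes "0 < c" and "c < b"
  shows "eventually (\<lambda>n. real n * c ^ n < b ^ n) sequentially"
proof -
  have "((\<lambda>n. of_nat n / (b / c) ^ n) \<longlongrightarrow> 0) sequentially"
    by (rule lim_n_over_pown) (use assms in simp)
  then have "eventually (\<lambda>n. real n / (b / c) ^ n < 1) sequentially"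
    by (rule order_tendstoD) simp
  then show ?thesis
    by eventually_elim (use assms in \<open>simp add: field_simps power_divide\<close>)
qed

theorem lemma4p1:
  shows "\<exists>R. \<forall>r\<ge>R. r \<ge> 1 \<longrightarrow>
           real (num_conj_classes (M12_wr r)) > (real (12 ^ r)) powr 1.08"
proof -
  obtain R where R: "\<And>r. r \<ge> R \<Longrightarrow> real r * ((12::real) powr 1.08) ^ r < 15 ^ r"
    using eventually_mult_power_less[OF _ twelve_powr_less_fifteen]
    by (auto simp: eventually_sequentially)
  have "real (num_conj_classes (M12_wr r)) > (real (12 ^ r)) powr 1.08"
    if "r \<ge> R" and "r \<ge> 1" for r
  proof -
    have "(real (12 ^ r)) powr 1.08 = ((12::real) powr 1.08) ^ r"
      by (simp add: powr_realpow[symmetric] powr_powr mult.commute)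
    moreover have "real r * ((12::real) powr 1.08) ^ r < real r * num_conj_classes (M12_wr r)"
      using R[OF that(1)] power_le_mult_num_conj_classes_M12_wr[OF that(2)]
      by (metis of_nat_le_iff of_nat_mult of_nat_numeral of_nat_power order_less_le_trans)
    ultimately show ?thesis
      using that(2) by simp
  qed
  then show ?thesis
    by blast
qed

end
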